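(* Suppose $p_0$ has support $\{0,\dots,S\}$ with $S\in\mathbb N\setminus\{0\}$. Then with probability one there exists $n_0$ such that for all $n\ge n_0$ the support of $\hat p_n$ is either $\{0,\dots,S\}$ or $\{0,\dots,S+1\}$.
   Context: Let $\mathbb N=\{0,1,2,\dots\}$. For a real sequence $p$ and $k\ge1$ let $\Delta p(k)=p(k+1)-2p(k)+p(k-1)$; $p$ is convex if $\Delta p(k)\ge0$ for all $k\ge1$; $\mathcal C$ is the set of convex sequences with $\sum_kp(k)^2<\infty$. Let $p_0$ be a convex probability mass function on $\mathbb N$ (so $p_0(k)>0$ for $k\le S$ and $p_0(k)=0$ for $k\ge S+1$). Let $X_1,X_2,\dots$ be i.i.d. with pmf $p_0$, $p_n(j)=\frac1n\sum_{i=1}^n\mathbb 1\{X_i=j\}$, and let the least squares estimator $\hat p_n$ be the unique minimizer over $\mathcal C$ of $\frac12\sum_{j\in\mathbb N}(p_n(j)-p(j))^2$. The support of a sequence $p$ is $\{k: p(k)\neq 0\}$. *)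

theory Defs
  imports "HOL-Probability.Probability"
begin

definition convex_seq :: "(nat \<Rightarrow> real) \<Rightarrow> bool" where
  "convex_seq p \<longleftrightarrow> (\<forall>k\<ge>1. p (k + 1) - 2 * p k + p (k - 1) \<ge> 0)"

definition convex_class :: "(nat \<Rightarrow> real) set" where
  "convex_class = {p. convex_seq p \<and> summable (\<lambda>k. (p k)\<^sup>2)}"

definition ls_objective :: "(nat \<Rightarrow> real) \<Rightarrow> (nat \<Rightarrow> real) \<Rightarrow> real" where
  "ls_objective q p = (1/2) * (\<Sum>j. (q j - p j)\<^sup>2)"

definition lse :: "(nat \<Rightarrow> real) \<Rightarrow> (nat \<Rightarrow> real)" where
  "lse q = (THE p. p \<in> convex_class \<and> (\<forall>p'\<in>convex_class. ls_objective q p \<le> ls_objective q p'))"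

definition emp_pmf :: "(nat \<Rightarrow> 'a \<Rightarrow> nat) \<Rightarrow> nat \<Rightarrow> 'a \<Rightarrow> nat \<Rightarrow> real" where
  "emp_pmf X n \<omega> j = real (card {i\<in>{1..n}. X i \<omega> = j}) / real n"

definition seq_support :: "(nat \<Rightarrow> real) \<Rightarrow> nat set" where
  "seq_support p = {k. p k \<noteq> 0}"

end

theory Submission
  imports Defs
begin

text \<open>Almost surely the empirical pmf q eventually vanishes beyond S (no observation
  falls there) and is uniformly close to p0 on {0..S} (Hoeffding and Borel-Cantelli).
  For such q, let ps be the least squares fit among convex sequences vanishing from S + 2 on,
  which exists by compactness. Projections onto convex sets are nonexpansive, so ps is close
  to p0: ps(S) is large and ps(S+1) small, hence ps has a strict kink at S + 1.
  Summation by parts twice expresses the inner product of the residual r = q - ps with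
  a convex p through the second differences of p and the "hinge sums" of r, whose signs
  follow from perturbing ps by hinges (j - k)_+; the kink allows the perturbation at S + 1
  in both directions. Thus r satisfies the optimality conditions for the whole cone of
  convex sequences, so ps is the estimator, and its support is {0..S} or {0..S+1}.\<close>

lemma convex_seq_incseq_diff:
  assumes "convex_seq p"
  shows "incseq (\<lambda>k. p (Suc k) - p k)"
proof (rule incseq_SucI)
  fix k
  show "p (Suc k) - p k \<le> p (Suc (Suc k)) - p (Suc k)"
    using assms[unfolded convex_seq_def, rule_format, of "Suc k"] by simp
qed

lemma convex_seq_tendsto_zero_decseq:
  assumes "convex_seq p" "p \<longlonglongrightarrow> 0"
  shows "decseq p"
proof (rule decseq_SucI)
  fix k
  have "(\<lambda>k. p (Suc k) - p k) \<longlonglongrightarrow> 0 - 0"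
    using assms(2) by (intro tendsto_diff LIMSEQ_Suc)
  then have "p (Suc k) - p k \<le> 0"
    using incseq_le[OF convex_seq_incseq_diff[OF assms(1)]] by force
  then show "p (Suc k) \<le> p k" by simp
qed

lemma convex_class_tendsto_zero:
  assumes "p \<in> convex_class"
  shows "p \<longlonglongrightarrow> 0"
proof -
  have "(\<lambda>k. (p k)\<^sup>2) \<longlonglongrightarrow> 0"
    using assms by (intro summable_LIMSEQ_zero) (simp add: convex_class_def)
  then have "(\<lambda>k. sqrt ((p k)\<^sup>2)) \<longlonglongrightarrow> 0"
    using tendsto_real_sqrt by fastforce
  then show ?thesis by (simp add: tendsto_rabs_zero_iff)
qed

lemma convex_class_decseq: "p \<in> convex_class \<Longrightarrow> decseq p"
  by (intro convex_seq_tendsto_zero_decseq convex_class_tendsto_zero)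
     (simp_all add: convex_class_def)

lemma convex_class_nonneg: "p \<in> convex_class \<Longrightarrow> p k \<ge> 0"
  using decseq_ge[OF convex_class_decseq convex_class_tendsto_zero] by simp

lemma convex_seq_nonneg_comb:
  assumes "convex_seq p" "convex_seq p'" "\<alpha> \<ge> 0" "\<beta> \<ge> 0"
  shows "convex_seq (\<lambda>k. \<alpha> * p k + \<beta> * p' k)"
  unfolding convex_seq_def
proof (intro allI impI)
  fix k :: nat assume "k \<ge> 1"
  then have "p (k + 1) - 2 * p k + p (k - 1) \<ge> 0" "p' (k + 1) - 2 * p' k + p' (k - 1) \<ge> 0"
    using assms(1,2) unfolding convex_seq_def by blast+
  then have "\<alpha> * (p (k + 1) - 2 * p k + p (k - 1)) + \<beta> * (p' (k + 1) - 2 * p' k + p' (k - 1)) \<ge> 0"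
    using assms(3,4) by simp
  then show "\<alpha> * p (k + 1) + \<beta> * p' (k + 1) - 2 * (\<alpha> * p k + \<beta> * p' k)
      + (\<alpha> * p (k - 1) + \<beta> * p' (k - 1)) \<ge> 0"
    by (simp add: algebra_simps)
qed

definition hinge :: "nat \<Rightarrow> nat \<Rightarrow> real" where
  "hinge j k = real (j - k)"

lemma hinge_second_diff:
  assumes "k \<ge> 1"
  shows "hinge j (k + 1) - 2 * hinge j k + hinge j (k - 1) = (if k = j then 1 else 0)"
  using assms unfolding hinge_def by (cases "k < j") (auto simp: of_nat_diff)

lemma convex_seq_hinge: "j \<ge> 1 \<Longrightarrow> convex_seq (hinge j)"
  unfolding convex_seq_def using hinge_second_diff by simp

lemma hinge_eq_0: "j \<le> k \<Longrightarrow> hinge j k = 0"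
  by (simp add: hinge_def)

lemma convex_seq_minus_hinge:
  assumes "convex_seq p" "j \<ge> 1" "0 \<le> c" "c \<le> p (j + 1) - 2 * p j + p (j - 1)"
  shows "convex_seq (\<lambda>k. p k - c * hinge j k)"
  unfolding convex_seq_def
proof (intro allI impI)
  fix k :: nat assume k: "k \<ge> 1"
  have "(p (k + 1) - c * hinge j (k + 1)) - 2 * (p k - c * hinge j k) + (p (k - 1) - c * hinge j (k - 1))
      = (p (k + 1) - 2 * p k + p (k - 1)) - c * (hinge j (k + 1) - 2 * hinge j k + hinge j (k - 1))"
    by (simp add: algebra_simps)
  also have "\<dots> = (p (k + 1) - 2 * p k + p (k - 1)) - c * (if k = j then 1 else 0)"
    by (simp only: hinge_second_diff[OF k])
  also have "\<dots> \<ge> 0"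
    using assms k by (auto simp: convex_seq_def)
  finally show "(p (k + 1) - c * hinge j (k + 1)) - 2 * (p k - c * hinge j k)
      + (p (k - 1) - c * hinge j (k - 1)) \<ge> 0" .
qed

definition hinge_sum :: "(nat \<Rightarrow> real) \<Rightarrow> nat \<Rightarrow> real" where
  "hinge_sum r j = (\<Sum>k<j. r k * hinge j k)"

lemma hinge_sum_eq_sum_lessThan:
  "j \<le> N \<Longrightarrow> hinge_sum r j = (\<Sum>k<N. r k * hinge j k)"
  unfolding hinge_sum_def by (intro sum.mono_neutral_left) (auto simp: hinge_eq_0)

lemma hinge_sum_Suc: "hinge_sum r (Suc n) = hinge_sum r n + (\<Sum>k<Suc n. r k)"
proof -
  have "hinge_sum r (Suc n) = (\<Sum>k<n. r k * hinge n k + r k) + r n"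
    by (simp add: hinge_sum_def hinge_def Suc_diff_le algebra_simps)
  then show ?thesis by (simp add: hinge_sum_def sum.distrib)
qed

text \<open>Summation by parts, twice: the weights p are traded for their second differences.\<close>
lemma sum_mult_eq_second_diff:
  "(\<Sum>k<Suc m. r k * p k) = p (Suc m) * (\<Sum>k<Suc m. r k) + (p m - p (Suc m)) * hinge_sum r (Suc m)
     + (\<Sum>j\<in>{1..m}. (p (j + 1) - 2 * p j + p (j - 1)) * hinge_sum r j)"
proof (induction m)
  case 0 then show ?case by (simp add: hinge_sum_def hinge_def algebra_simps)
next
  case (Suc m)
  have "hinge_sum r (Suc (Suc m)) = hinge_sum r (Suc m) + (\<Sum>k<Suc m. r k) + r (Suc m)"
    using hinge_sum_Suc[of r "Suc m"] by simp
  then show ?case using Suc by (simp add: sum.cl_ivl_Suc algebra_simps)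
qed

lemma sum_mult_convex_class_nonpos:
  assumes "p \<in> convex_class"
    and "(\<Sum>k<Suc m. r k) \<le> 0" and "\<And>j. 1 \<le> j \<Longrightarrow> j \<le> Suc m \<Longrightarrow> hinge_sum r j \<le> 0"
  shows "(\<Sum>k<Suc m. r k * p k) \<le> 0"
proof -
  have "p (Suc m) * (\<Sum>k<Suc m. r k) \<le> 0"
    using assms(2) convex_class_nonneg[OF assms(1)] by (simp add: mult_nonneg_nonpos)
  moreover have "(p m - p (Suc m)) * hinge_sum r (Suc m) \<le> 0"
    using assms(3)[of "Suc m"] convex_class_decseq[OF assms(1)]
    by (simp add: decseq_Suc_iff mult_nonneg_nonpos)
  moreover have "(\<Sum>j\<in>{1..m}. (p (j + 1) - 2 * p j + p (j - 1)) * hinge_sum r j) \<le> 0"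
  proof (rule sum_nonpos)
    fix j assume "j \<in> {1..m}"
    then have "p (j + 1) - 2 * p j + p (j - 1) \<ge> 0" "hinge_sum r j \<le> 0"
      using assms(1,3) by (auto simp: convex_class_def convex_seq_def)
    then show "(p (j + 1) - 2 * p j + p (j - 1)) * hinge_sum r j \<le> 0"
      by (simp add: mult_nonneg_nonpos)
  qed
  ultimately show ?thesis unfolding sum_mult_eq_second_diff by linarith
qed

definition convex_vanishing :: "nat \<Rightarrow> (nat \<Rightarrow> real) set" where
  "convex_vanishing N = {p. convex_seq p \<and> (\<forall>k\<ge>N. p k = 0)}"

lemma convex_vanishing_subset_convex_class: "convex_vanishing N \<subseteq> convex_class"
proof
  fix p assume p: "p \<in> convex_vanishing N"
  then have "summable (\<lambda>k. (p k)\<^sup>2)"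
    by (intro summable_finite[of "{..<N}"]) (auto simp: convex_vanishing_def)
  then show "p \<in> convex_class" using p by (simp add: convex_class_def convex_vanishing_def)
qed

lemma convex_vanishing_convex_comb:
  assumes "p \<in> convex_vanishing N" "p' \<in> convex_vanishing N" "0 \<le> t" "t \<le> 1"
  shows "(\<lambda>k. (1 - t) * p k + t * p' k) \<in> convex_vanishing N"
  using assms convex_seq_nonneg_comb[of p p' "1 - t" t] by (simp add: convex_vanishing_def)

lemma continuous_on_coordinate [continuous_intros]:
  "continuous_on A (\<lambda>x::nat\<Rightarrow>real. x i)"
  by (rule continuous_on_subset[OF continuous_on_product_coordinates]) simp

lemma closed_convex_vanishing: "closed (convex_vanishing N)"
proof -
  have "convex_vanishing N = (\<Inter>k\<in>{1..}. {p. p (k + 1) - 2 * p k + p (k - 1) \<ge> 0})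
      \<inter> (\<Inter>k\<in>{N..}. {p. p k = 0})"
    unfolding convex_vanishing_def convex_seq_def by auto
  also have "closed \<dots>"
    by (intro closed_Int closed_INT ballI closed_Collect_le closed_Collect_eq continuous_intros)
  finally show ?thesis .
qed

lemma compact_convex_vanishing_sublevel:
  fixes q :: "nat \<Rightarrow> real"
  shows "compact (convex_vanishing N \<inter> {p. (\<Sum>k<N. (q k - p k)\<^sup>2) \<le> c})"
    (is "compact ?L")
proof -
  define B where "B = (\<Sum>k<N. \<bar>q k\<bar>) + sqrt c"
  let ?box = "\<Pi>\<^sub>E i\<in>UNIV. if i < N then {-B..B} else {0::real}"
  have "?L \<subseteq> ?box"
  proof
    fix p assume "p \<in> ?L"
    then have tail: "\<And>k. N \<le> k \<Longrightarrow> p k = 0" and sublevel: "(\<Sum>k<N. (q k - p k)\<^sup>2) \<le> c"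
      by (auto simp: convex_vanishing_def)
    have "\<bar>p k\<bar> \<le> B" if "k < N" for k
    proof -
      have "\<bar>q k - p k\<bar>\<^sup>2 \<le> (\<Sum>k<N. (q k - p k)\<^sup>2)"
        unfolding power2_abs using that by (intro member_le_sum) auto
      then have "\<bar>q k - p k\<bar> \<le> sqrt c" using sublevel by (intro real_le_rsqrt) linarith
      moreover have "\<bar>q k\<bar> \<le> (\<Sum>k<N. \<bar>q k\<bar>)" using that by (intro member_le_sum) auto
      ultimately show ?thesis unfolding B_def by linarith
    qed
    then show "p \<in> ?box"
      using tail by (force simp: PiE_iff abs_le_iff not_less)
  qed
  then have L_eq: "?box \<inter> ?L = ?L" by (rule Int_absorb1)
  have "compact ?box"
    using compactin_PiE[of "\<lambda>_. euclidean" UNIV "\<lambda>i. if i < N then {-B..B} else {0::real}"]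
    by (simp add: euclidean_product_topology)
  moreover have "closed ?L"
    by (intro closed_Int closed_convex_vanishing closed_Collect_le continuous_intros)
  ultimately have "compact (?box \<inter> ?L)" by (rule compact_Int_closed)
  then show ?thesis by (simp only: L_eq)
qed

lemma exists_sum_sq_min_convex_vanishing:
  fixes q :: "nat \<Rightarrow> real"
  obtains ps where "ps \<in> convex_vanishing N"
    and "\<And>p. p \<in> convex_vanishing N \<Longrightarrow> (\<Sum>k<N. (q k - ps k)\<^sup>2) \<le> (\<Sum>k<N. (q k - p k)\<^sup>2)"
proof -
  define F where "F p = (\<Sum>k<N. (q k - p k)\<^sup>2)" for p :: "nat \<Rightarrow> real"
  define L where "L = convex_vanishing N \<inter> {p. F p \<le> F (\<lambda>_. 0)}"
  have zero_in_L: "(\<lambda>_. 0) \<in> L"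
    by (simp add: L_def convex_vanishing_def convex_seq_def)
  have "compact L"
    unfolding L_def F_def by (rule compact_convex_vanishing_sublevel)
  moreover have "continuous_on L F"
    unfolding F_def by (intro continuous_intros)
  ultimately have "\<exists>ps\<in>L. \<forall>p\<in>L. F ps \<le> F p"
    using zero_in_L by (intro continuous_attains_inf) auto
  then obtain ps where ps: "ps \<in> L" "\<And>p. p \<in> L \<Longrightarrow> F ps \<le> F p" by blast
  have "F ps \<le> F p" if "p \<in> convex_vanishing N" for p
  proof (cases "F p \<le> F (\<lambda>_. 0)")
    case True then show ?thesis using ps(2) that by (simp add: L_def)
  next
    case False then show ?thesis using ps(2)[OF zero_in_L] by simp
  qed
  then show ?thesis using ps(1) that unfolding L_def F_def by blast
qed

lemma sum_sq_min_variational: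
  fixes q ps :: "nat \<Rightarrow> real" and C :: "(nat \<Rightarrow> real) set"
  assumes convex: "\<And>t. 0 < t \<Longrightarrow> t \<le> 1 \<Longrightarrow> (\<lambda>k. (1 - t) * ps k + t * p k) \<in> C"
    and min: "\<And>p'. p' \<in> C \<Longrightarrow> (\<Sum>k\<in>A. (q k - ps k)\<^sup>2) \<le> (\<Sum>k\<in>A. (q k - p' k)\<^sup>2)"
  shows "(\<Sum>k\<in>A. (q k - ps k) * (p k - ps k)) \<le> 0"
proof (rule ccontr)
  define a where "a = (\<Sum>k\<in>A. (q k - ps k) * (p k - ps k))"
  define b where "b = (\<Sum>k\<in>A. (p k - ps k)\<^sup>2)"
  assume "\<not> ?thesis"
  then have a: "a > 0" by (simp add: a_def)
  have step: "2 * t * a \<le> t * t * b" if "0 < t" "t \<le> 1" for t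
  proof -
    have "(\<Sum>k\<in>A. (q k - ((1 - t) * ps k + t * p k))\<^sup>2)
        = (\<Sum>k\<in>A. (q k - ps k)\<^sup>2 - 2 * t * ((q k - ps k) * (p k - ps k)) + t * t * (p k - ps k)\<^sup>2)"
      by (intro sum.cong) (auto simp: power2_eq_square algebra_simps)
    also have "\<dots> = (\<Sum>k\<in>A. (q k - ps k)\<^sup>2) - 2 * t * a + t * t * b"
      by (simp add: a_def b_def sum.distrib sum_subtractf sum_distrib_left)
    finally show ?thesis using min[OF convex[OF that]] by linarith
  qed
  have "b > 0" using step[of 1] a by simp
  define t where "t = min 1 (a / b)"
  have "0 < t" "t \<le> 1" "t * b \<le> a"
    using a \<open>b > 0\<close> by (auto simp: t_def min_def field_simps)
  then have "t * (t * b) \<le> t * a" by (intro mult_left_mono) auto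
  moreover have "2 * (t * a) \<le> t * (t * b)"
    using step[OF \<open>0 < t\<close> \<open>t \<le> 1\<close>] by (simp add: mult.assoc)
  moreover have "t * a > 0" using \<open>0 < t\<close> a by simp
  ultimately show False by linarith
qed

lemma sum_sq_le_of_variational:
  fixes q ps p :: "nat \<Rightarrow> real"
  assumes "(\<Sum>k\<in>A. (q k - ps k) * (p k - ps k)) \<le> 0"
  shows "(\<Sum>k\<in>A. (ps k - p k)\<^sup>2) \<le> (\<Sum>k\<in>A. (q k - p k)\<^sup>2)"
proof -
  have "(\<Sum>k\<in>A. (q k - p k)\<^sup>2)
      = (\<Sum>k\<in>A. (ps k - p k)\<^sup>2 + (q k - ps k)\<^sup>2 - 2 * ((q k - ps k) * (p k - ps k)))"
    by (intro sum.cong) (auto simp: power2_eq_square algebra_simps)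
  then have "(\<Sum>k\<in>A. (q k - p k)\<^sup>2)
      = (\<Sum>k\<in>A. (ps k - p k)\<^sup>2) + (\<Sum>k\<in>A. (q k - ps k)\<^sup>2) - 2 * (\<Sum>k\<in>A. (q k - ps k) * (p k - ps k))"
    by (simp add: sum.distrib sum_subtractf sum_distrib_left)
  moreover have "(\<Sum>k\<in>A. (q k - ps k)\<^sup>2) \<ge> 0" by (simp add: sum_nonneg)
  ultimately show ?thesis using assms by linarith
qed

lemma sq_dist_le_of_variational:
  fixes q ps p :: "nat \<Rightarrow> real"
  assumes var: "(\<Sum>k<N. (q k - ps k) * (p k - ps k)) \<le> 0"
    and close: "\<And>k. k < N \<Longrightarrow> \<bar>q k - p k\<bar> \<le> \<delta>" and "k < N"
  shows "(ps k - p k)\<^sup>2 \<le> N * \<delta>\<^sup>2"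
proof -
  have "(ps k - p k)\<^sup>2 \<le> (\<Sum>k<N. (ps k - p k)\<^sup>2)"
    using \<open>k < N\<close> by (intro member_le_sum) auto
  also have "\<dots> \<le> (\<Sum>k<N. (q k - p k)\<^sup>2)"
    using var by (rule sum_sq_le_of_variational)
  also have "\<dots> \<le> (\<Sum>k<N. \<delta>\<^sup>2)"
  proof (rule sum_mono)
    fix k assume "k \<in> {..<N}"
    then have "\<bar>q k - p k\<bar>\<^sup>2 \<le> \<delta>\<^sup>2" using close by (intro power_mono) auto
    then show "(q k - p k)\<^sup>2 \<le> \<delta>\<^sup>2" by (simp only: power2_abs)
  qed
  finally show ?thesis by simp
qed

lemma exists_projection_convex_vanishing:
  fixes q :: "nat \<Rightarrow> real"
  obtains ps where "ps \<in> convex_vanishing N"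
    and "\<And>p. p \<in> convex_vanishing N \<Longrightarrow> (\<Sum>k<N. (q k - ps k) * (p k - ps k)) \<le> 0"
proof -
  obtain ps where ps: "ps \<in> convex_vanishing N"
    and min: "\<And>p. p \<in> convex_vanishing N \<Longrightarrow> (\<Sum>k<N. (q k - ps k)\<^sup>2) \<le> (\<Sum>k<N. (q k - p k)\<^sup>2)"
    using exists_sum_sq_min_convex_vanishing by blast
  have "(\<Sum>k<N. (q k - ps k) * (p k - ps k)) \<le> 0" if "p \<in> convex_vanishing N" for p
    using ps that min by (intro sum_sq_min_variational[where C = "convex_vanishing N"])
      (auto intro: convex_vanishing_convex_comb)
  with ps show ?thesis using that by blast
qed

lemma summable_sq_diff:
  fixes f g :: "nat \<Rightarrow> real"
  assumes "summable (\<lambda>k. (f k)\<^sup>2)" "summable (\<lambda>k. (g k)\<^sup>2)"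
  shows "summable (\<lambda>k. (f k - g k)\<^sup>2)"
proof (rule summable_comparison_test')
  show "summable (\<lambda>k. 2 * (f k)\<^sup>2 + 2 * (g k)\<^sup>2)"
    using assms by (intro summable_add summable_mult)
  fix k
  have "2 * (f k)\<^sup>2 + 2 * (g k)\<^sup>2 - (f k - g k)\<^sup>2 = (f k + g k)\<^sup>2"
    by (simp add: power2_eq_square algebra_simps)
  moreover have "0 \<le> (f k + g k)\<^sup>2" "norm ((f k - g k)\<^sup>2) = (f k - g k)\<^sup>2" by simp_all
  ultimately show "norm ((f k - g k)\<^sup>2) \<le> 2 * (f k)\<^sup>2 + 2 * (g k)\<^sup>2" by linarith
qed

lemma ls_objective_add_sq_dist_le:
  fixes q ps p :: "nat \<Rightarrow> real"
  assumes ps: "ps \<in> convex_class" and p: "p \<in> convex_class"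
    and tail: "\<And>k. N \<le> k \<Longrightarrow> q k = ps k"
    and orth: "(\<Sum>k<N. (q k - ps k) * ps k) = 0"
    and dual: "(\<Sum>k<N. (q k - ps k) * p k) \<le> 0"
  shows "ls_objective q ps + (1/2) * (\<Sum>k. (ps k - p k)\<^sup>2) \<le> ls_objective q p"
proof -
  define h where "h k = 2 * (q k - ps k) * (ps k - p k) + (q k - ps k)\<^sup>2" for k
  have h_tail: "h k = 0" if "k \<notin> {..<N}" for k using tail that by (simp add: h_def)
  have "summable (\<lambda>k. (ps k - p k)\<^sup>2)"
    using ps p by (intro summable_sq_diff) (auto simp: convex_class_def)
  moreover have "(\<lambda>k. (q k - p k)\<^sup>2) = (\<lambda>k. (ps k - p k)\<^sup>2 + h k)"
    by (auto simp: h_def power2_eq_square algebra_simps)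
  ultimately have "(\<Sum>k. (q k - p k)\<^sup>2) = (\<Sum>k. (ps k - p k)\<^sup>2) + (\<Sum>k<N. h k)"
    using suminf_add[OF _ summable_finite[of "{..<N}" h]] h_tail suminf_finite[of "{..<N}" h]
    by simp
  also have "(\<Sum>k<N. h k)
      = (\<Sum>k<N. 2 * ((q k - ps k) * ps k) - 2 * ((q k - ps k) * p k) + (q k - ps k)\<^sup>2)"
    by (intro sum.cong refl) (simp add: h_def power2_eq_square algebra_simps)
  also have "\<dots> = 2 * (\<Sum>k<N. (q k - ps k) * ps k) - 2 * (\<Sum>k<N. (q k - ps k) * p k)
      + (\<Sum>k<N. (q k - ps k)\<^sup>2)"
    by (simp add: sum.distrib sum_subtractf sum_distrib_left)
  also have "(\<Sum>k<N. (q k - ps k)\<^sup>2) = (\<Sum>k. (q k - ps k)\<^sup>2)"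
    using tail by (subst suminf_finite[of "{..<N}"]) auto
  finally show ?thesis
    using orth dual by (simp add: ls_objective_def)
qed

lemma lse_eqI:
  fixes q ps :: "nat \<Rightarrow> real"
  assumes ps: "ps \<in> convex_class" and tail: "\<And>k. N \<le> k \<Longrightarrow> q k = ps k"
    and orth: "(\<Sum>k<N. (q k - ps k) * ps k) = 0"
    and dual: "\<And>p. p \<in> convex_class \<Longrightarrow> (\<Sum>k<N. (q k - ps k) * p k) \<le> 0"
  shows "lse q = ps"
  unfolding lse_def
proof (rule the_equality)
  have summable_dist: "summable (\<lambda>k. (ps k - p k)\<^sup>2)" if "p \<in> convex_class" for p
    using ps that by (intro summable_sq_diff) (auto simp: convex_class_def)
  have le: "ls_objective q ps + (1/2) * (\<Sum>k. (ps k - p k)\<^sup>2) \<le> ls_objective q p"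
    and dist_nonneg: "0 \<le> (\<Sum>k. (ps k - p k)\<^sup>2)" if "p \<in> convex_class" for p
    using ls_objective_add_sq_dist_le[OF ps that tail orth dual[OF that]]
      suminf_nonneg[OF summable_dist[OF that]] by simp_all
  show "ps \<in> convex_class \<and> (\<forall>p'\<in>convex_class. ls_objective q ps \<le> ls_objective q p')"
  proof (intro conjI ballI ps)
    fix p' assume "p' \<in> convex_class"
    then show "ls_objective q ps \<le> ls_objective q p'"
      using le[of p'] dist_nonneg[of p'] by linarith
  qed
  fix p assume p: "p \<in> convex_class \<and> (\<forall>p'\<in>convex_class. ls_objective q p \<le> ls_objective q p')"
  then have "(\<Sum>k. (ps k - p k)\<^sup>2) = 0"
    using le[of p] dist_nonneg[of p] ps by fastforce
  then have "\<forall>k. (ps k - p k)\<^sup>2 = 0"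
    using summable_dist p by (simp add: suminf_eq_zero_iff)
  then show "p = ps" by auto
qed

lemma sum_mult_eq_0_of_max_convex_vanishing:
  assumes ps: "ps \<in> convex_vanishing N"
    and max: "\<And>p. p \<in> convex_vanishing N \<Longrightarrow> (\<Sum>k<N. r k * p k) \<le> (\<Sum>k<N. r k * ps k)"
  shows "(\<Sum>k<N. r k * ps k) = 0"
proof -
  have scaled: "(\<lambda>k. c * ps k) \<in> convex_vanishing N" if "0 \<le> c" for c
    using ps that convex_seq_nonneg_comb[of ps ps c 0] by (simp add: convex_vanishing_def)
  show ?thesis
    using max[OF scaled[of 0]] max[OF scaled[of 2]]
    by (simp add: mult.left_commute[of _ 2] sum_distrib_left[symmetric])
qed

lemma hinge_sum_nonpos_of_max_convex_vanishing:
  assumes ps: "ps \<in> convex_vanishing N"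
    and max: "\<And>p. p \<in> convex_vanishing N \<Longrightarrow> (\<Sum>k<N. r k * p k) \<le> (\<Sum>k<N. r k * ps k)"
    and "1 \<le> j" "j \<le> N"
  shows "hinge_sum r j \<le> 0"
proof -
  have "(\<lambda>k. 1 * ps k + 1 * hinge j k) \<in> convex_vanishing N"
    using ps \<open>1 \<le> j\<close> \<open>j \<le> N\<close> convex_seq_nonneg_comb[OF _ convex_seq_hinge[of j], of ps 1 1]
    by (auto simp: convex_vanishing_def hinge_eq_0)
  then have "(\<Sum>k<N. r k * (ps k + hinge j k)) \<le> (\<Sum>k<N. r k * ps k)"
    using max by simp
  then have "(\<Sum>k<N. r k * hinge j k) \<le> 0"
    by (simp add: distrib_left sum.distrib)
  then show ?thesis using hinge_sum_eq_sum_lessThan[OF \<open>j \<le> N\<close>] by simp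
qed

text \<open>A strict kink of ps at m + 1 leaves room to subtract a hinge there.\<close>
lemma hinge_sum_nonneg_at_kink:
  assumes ps: "ps \<in> convex_vanishing (Suc (Suc m))"
    and max: "\<And>p. p \<in> convex_vanishing (Suc (Suc m)) \<Longrightarrow>
      (\<Sum>k<Suc (Suc m). r k * p k) \<le> (\<Sum>k<Suc (Suc m). r k * ps k)"
    and kink: "2 * ps (Suc m) < ps m"
  shows "hinge_sum r (Suc m) \<ge> 0"
proof -
  define c where "c = ps m - 2 * ps (Suc m)"
  have "c = ps (Suc m + 1) - 2 * ps (Suc m) + ps (Suc m - 1)"
    using ps by (simp add: c_def convex_vanishing_def)
  then have "convex_seq (\<lambda>k. ps k - c * hinge (Suc m) k)"
    using ps kink by (intro convex_seq_minus_hinge) (auto simp: c_def convex_vanishing_def)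
  then have "(\<lambda>k. ps k - c * hinge (Suc m) k) \<in> convex_vanishing (Suc (Suc m))"
    using ps by (auto simp: convex_vanishing_def hinge_eq_0)
  then have "(\<Sum>k<Suc (Suc m). r k * (ps k - c * hinge (Suc m) k)) \<le> (\<Sum>k<Suc (Suc m). r k * ps k)"
    by (rule max)
  then have "c * (\<Sum>k<Suc (Suc m). r k * hinge (Suc m) k) \<ge> 0"
    by (simp add: right_diff_distrib sum_subtractf sum_distrib_left algebra_simps)
  then show ?thesis
    using kink hinge_sum_eq_sum_lessThan[of "Suc m" "Suc (Suc m)" r]
    by (simp add: c_def zero_le_mult_iff)
qed

lemma sum_mult_convex_class_nonpos_of_max_convex_vanishing:
  assumes ps: "ps \<in> convex_vanishing (Suc (Suc m))"
    and max: "\<And>p. p \<in> convex_vanishing (Suc (Suc m)) \<Longrightarrow>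
      (\<Sum>k<Suc (Suc m). r k * p k) \<le> (\<Sum>k<Suc (Suc m). r k * ps k)"
    and kink: "2 * ps (Suc m) < ps m"
    and p: "p \<in> convex_class"
  shows "(\<Sum>k<Suc (Suc m). r k * p k) \<le> 0"
proof -
  have hinge_nonpos: "hinge_sum r j \<le> 0" if "1 \<le> j" "j \<le> Suc (Suc m)" for j
    using hinge_sum_nonpos_of_max_convex_vanishing[OF ps max that] .
  have "(\<Sum>k<Suc (Suc m). r k)
      = (\<Sum>k<Suc (Suc m). r k * hinge (Suc (Suc m)) k) - (\<Sum>k<Suc (Suc m). r k * hinge (Suc m) k)"
    unfolding sum_subtractf[symmetric]
    by (intro sum.cong) (auto simp: hinge_def algebra_simps of_nat_diff)
  also have "\<dots> = hinge_sum r (Suc (Suc m)) - hinge_sum r (Suc m)"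
    by (simp only: hinge_sum_eq_sum_lessThan[of "Suc (Suc m)" "Suc (Suc m)" r, OF order_refl]
        hinge_sum_eq_sum_lessThan[of "Suc m" "Suc (Suc m)" r, OF le_SucI[OF order_refl]])
  also have "\<dots> \<le> 0"
    using hinge_nonpos[of "Suc (Suc m)"] hinge_sum_nonneg_at_kink[OF ps max kink] by simp
  finally show ?thesis
    using sum_mult_convex_class_nonpos[OF p, where m = "Suc m"] hinge_nonpos by simp
qed

lemma lse_eq_projection_at_kink:
  fixes q ps :: "nat \<Rightarrow> real"
  assumes ps: "ps \<in> convex_vanishing (Suc (Suc m))"
    and q_tail: "\<And>k. Suc (Suc m) \<le> k \<Longrightarrow> q k = 0"
    and var: "\<And>p. p \<in> convex_vanishing (Suc (Suc m)) \<Longrightarrow>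
      (\<Sum>k<Suc (Suc m). (q k - ps k) * (p k - ps k)) \<le> 0"
    and kink: "2 * ps (Suc m) < ps m"
  shows "lse q = ps"
proof (rule lse_eqI)
  have max: "(\<Sum>k<Suc (Suc m). (q k - ps k) * p k) \<le> (\<Sum>k<Suc (Suc m). (q k - ps k) * ps k)"
    if "p \<in> convex_vanishing (Suc (Suc m))" for p
    using var[OF that] by (simp add: sum_subtractf right_diff_distrib)
  show "(\<Sum>k<Suc (Suc m). (q k - ps k) * ps k) = 0"
    by (rule sum_mult_eq_0_of_max_convex_vanishing[OF ps max])
  show "(\<Sum>k<Suc (Suc m). (q k - ps k) * p k) \<le> 0" if "p \<in> convex_class" for p
    by (rule sum_mult_convex_class_nonpos_of_max_convex_vanishing[OF ps max kink that])
  show "ps \<in> convex_class" using ps convex_vanishing_subset_convex_class by blast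
  show "q k = ps k" if "Suc (Suc m) \<le> k" for k
    using ps q_tail[OF that] that by (simp add: convex_vanishing_def)
qed

lemma convex_class_support_cases:
  assumes p: "p \<in> convex_class" and "p S > 0" and tail: "\<And>k. Suc (Suc S) \<le> k \<Longrightarrow> p k = 0"
  shows "seq_support p = {0..S} \<or> seq_support p = {0..S+1}"
proof -
  have "p k \<noteq> 0 \<longleftrightarrow> k \<le> S \<or> (k = Suc S \<and> p (Suc S) \<noteq> 0)" for k
  proof (cases "k \<le> S")
    case True
    then have "p S \<le> p k" using convex_class_decseq[OF p] by (simp add: decseq_def)
    then show ?thesis using True \<open>p S > 0\<close> by simp
  next
    case False then show ?thesis using tail[of k] by (cases "k = Suc S") simp_all
  qed
  then have support: "seq_support p = {k. k \<le> S \<or> (k = Suc S \<and> p (Suc S) \<noteq> 0)}"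
    unfolding seq_support_def by blast
  show ?thesis
  proof (cases "p (Suc S) = 0")
    case True
    then have "{k. k \<le> S \<or> (k = Suc S \<and> p (Suc S) \<noteq> 0)} = {0..S}" by auto
    then show ?thesis using support by simp
  next
    case False
    then have "{k. k \<le> S \<or> (k = Suc S \<and> p (Suc S) \<noteq> 0)} = {0..S+1}" by (auto simp: le_Suc_eq)
    then show ?thesis using support by simp
  qed
qed

lemma lse_support_near_convex:
  fixes p0 q :: "nat \<Rightarrow> real" and S :: nat
  assumes p0_convex: "convex_seq p0" and p0_tail: "\<And>k. S < k \<Longrightarrow> p0 k = 0" and p0_S: "p0 S > 0"
    and q_tail: "\<And>k. S < k \<Longrightarrow> q k = 0"
    and q_close: "\<And>k. k \<le> S \<Longrightarrow> \<bar>q k - p0 k\<bar> \<le> p0 S / (4 * (real S + 2))"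
  shows "seq_support (lse q) = {0..S} \<or> seq_support (lse q) = {0..S+1}"
proof -
  define N where "N = Suc (Suc S)"
  define c where "c = p0 S / 4"
  have c_pos: "c > 0" using p0_S by (simp add: c_def)
  obtain ps where ps: "ps \<in> convex_vanishing N"
    and var: "\<And>p. p \<in> convex_vanishing N \<Longrightarrow> (\<Sum>k<N. (q k - ps k) * (p k - ps k)) \<le> 0"
    using exists_projection_convex_vanishing by blast
  have "p0 \<in> convex_vanishing N"
    using p0_convex p0_tail by (simp add: convex_vanishing_def N_def)
  moreover have "\<bar>q k - p0 k\<bar> \<le> c / N" for k
  proof -
    have "c / N = p0 S / (4 * (real S + 2))" by (simp add: c_def N_def)
    then show ?thesis
      using q_close[of k] q_tail[of k] p0_tail[of k] p0_S by (cases "k \<le> S") auto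
  qed
  ultimately have sq_dist: "(ps k - p0 k)\<^sup>2 \<le> N * (c / N)\<^sup>2" if "k < N" for k
    using var that by (intro sq_dist_le_of_variational)
  have "N * (c / N)\<^sup>2 = c\<^sup>2 / N"
    by (simp add: N_def power2_eq_square del: of_nat_Suc)
  also have "\<dots> < c\<^sup>2 / 1"
    using c_pos by (intro divide_strict_left_mono) (simp_all add: N_def)
  finally have "\<bar>ps k - p0 k\<bar>\<^sup>2 < c\<^sup>2" if "k < N" for k
    using sq_dist[OF that] by simp
  then have dist: "\<bar>ps k - p0 k\<bar> < c" if "k < N" for k
    using that c_pos power2_less_imp_less by fastforce
  have ps_S: "ps S > 3 * c"
    using dist[of S] unfolding N_def c_def abs_less_iff by simp
  have ps_Suc_S: "ps (Suc S) < c"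
    using dist[of "Suc S"] p0_tail[of "Suc S"] unfolding N_def abs_less_iff by simp
  have ps_tail: "ps k = 0" if "Suc (Suc S) \<le> k" for k
    using ps that by (simp add: convex_vanishing_def N_def)
  have "2 * ps (Suc S) < ps S" using ps_S ps_Suc_S c_pos by linarith
  then have "lse q = ps"
    using ps var q_tail unfolding N_def by (intro lse_eq_projection_at_kink) simp_all
  moreover have "ps \<in> convex_class" using ps convex_vanishing_subset_convex_class by blast
  ultimately show ?thesis
    using convex_class_support_cases[of ps S] ps_S c_pos ps_tail by simp
qed

lemma emp_pmf_eq_sum_indicator:
  "emp_pmf X n \<omega> j = (\<Sum>i\<in>{1..n}. if X i \<omega> = j then 1 else 0) / real n"
  by (simp add: emp_pmf_def sum.inter_filter[symmetric])

lemma emp_pmf_eq_0: "(\<And>i. X i \<omega> \<noteq> j) \<Longrightarrow> emp_pmf X n \<omega> j = 0"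
  by (simp add: emp_pmf_def)

lemma borel_measurable_emp_pmf:
  assumes "\<And>i. X i \<in> measurable M (count_space UNIV)"
  shows "(\<lambda>\<omega>. emp_pmf X n \<omega> j) \<in> borel_measurable M"
  unfolding emp_pmf_eq_sum_indicator
  by (intro borel_measurable_divide borel_measurable_sum borel_measurable_const
      measurable_compose[OF assms, where g = "\<lambda>x. if x = j then 1 else 0 :: real"])
    (simp add: measurable_count_space)

lemma (in prob_space) prob_emp_pmf_deviation_le:
  fixes X :: "nat \<Rightarrow> 'a \<Rightarrow> nat"
  assumes meas: "\<And>i. X i \<in> measurable M (count_space UNIV)"
    and indep: "indep_vars (\<lambda>_. count_space UNIV) X UNIV"
    and distr: "\<And>i. prob {\<omega>\<in>space M. X i \<omega> = j} = pj"
    and "\<delta> \<ge> 0" and "n \<ge> 1"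
  shows "prob {\<omega>\<in>space M. \<delta> \<le> \<bar>emp_pmf X n \<omega> j - pj\<bar>} \<le> 2 * exp (-2 * \<delta>\<^sup>2) ^ n"
proof -
  define Y where "Y i \<omega> = (if X i \<omega> = j then 1 else 0 :: real)" for i \<omega>
  have expectation_Y: "expectation (Y i) = pj" for i
  proof -
    have "expectation (Y i) = expectation (indicator {\<omega>\<in>space M. X i \<omega> = j})"
      by (intro Bochner_Integration.integral_cong) (auto simp: Y_def indicator_def)
    also have "\<dots> = prob {\<omega>\<in>space M. X i \<omega> = j}"
      using measurable_sets[OF meas, of "{j}" i] by (simp add: vimage_def Int_def conj_commute)
    finally show ?thesis using distr by simp
  qed
  interpret Hoeffding_ineq M "{1..n}" Y "\<lambda>_. 0" "\<lambda>_. 1" "real n * pj"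
  proof unfold_locales
    show "indep_vars (\<lambda>_. borel) Y {1..n}"
      unfolding Y_def
      by (rule indep_vars_compose2[where Y = "\<lambda>_ x. if x = j then 1 else 0 :: real",
            OF indep_vars_subset[OF indep]]) auto
  qed (simp_all add: Y_def expectation_Y)
  have "prob {\<omega>\<in>space M. real n * \<delta> \<le> \<bar>(\<Sum>i\<in>{1..n}. Y i \<omega>) - real n * pj\<bar>}
      \<le> 2 * exp (-2 * (real n * \<delta>)\<^sup>2 / real n)"
    using Hoeffding_ineq_abs_ge[of "real n * \<delta>"] assms(4,5) by simp
  also have "exp (-2 * (real n * \<delta>)\<^sup>2 / real n) = exp (-2 * \<delta>\<^sup>2) ^ n"
    using assms(5) by (simp add: exp_of_nat_mult[symmetric] power2_eq_square)
  also have "{\<omega>\<in>space M. real n * \<delta> \<le> \<bar>(\<Sum>i\<in>{1..n}. Y i \<omega>) - real n * pj\<bar>}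
      = {\<omega>\<in>space M. \<delta> \<le> \<bar>emp_pmf X n \<omega> j - pj\<bar>}"
  proof -
    have "(\<Sum>i\<in>{1..n}. Y i \<omega>) - real n * pj = real n * (emp_pmf X n \<omega> j - pj)" for \<omega>
      using assms(5) by (simp add: emp_pmf_eq_sum_indicator Y_def algebra_simps)
    then show ?thesis using assms(5) by (simp add: abs_mult)
  qed
  finally show ?thesis .
qed

lemma (in prob_space) AE_emp_pmf_eventually_close:
  fixes X :: "nat \<Rightarrow> 'a \<Rightarrow> nat"
  assumes meas: "\<And>i. X i \<in> measurable M (count_space UNIV)"
    and indep: "indep_vars (\<lambda>_. count_space UNIV) X UNIV"
    and distr: "\<And>i. prob {\<omega>\<in>space M. X i \<omega> = j} = pj"
    and "\<delta> > 0"
  shows "AE \<omega> in M. eventually (\<lambda>n. \<bar>emp_pmf X n \<omega> j - pj\<bar> < \<delta>) sequentially"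
proof -
  define A where "A n = {\<omega>\<in>space M. \<delta> \<le> \<bar>emp_pmf X n \<omega> j - pj\<bar>}" for n
  have A_events: "A n \<in> events" for n
    using borel_measurable_emp_pmf[OF meas] unfolding A_def by measurable
  have prob_bound: "prob (A n) \<le> 2 * exp (-2 * \<delta>\<^sup>2) ^ n" for n
  proof (cases "n = 0")
    case True
    have "prob (A n) \<le> 2" using prob_le_1[of "A n"] by linarith
    with True show ?thesis by simp
  next
    case False then show ?thesis
      unfolding A_def using prob_emp_pmf_deviation_le[OF meas indep distr] \<open>\<delta> > 0\<close> by simp
  qed
  have "summable (\<lambda>n. 2 * exp (-2 * \<delta>\<^sup>2) ^ n)"
    using \<open>\<delta> > 0\<close> by (intro summable_mult summable_geometric) simp
  then have "summable (\<lambda>n. prob (A n))"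
    by (rule summable_comparison_test') (use prob_bound in simp)
  then have "AE \<omega> in M. eventually (\<lambda>n. \<omega> \<in> space M - A n) sequentially"
    using A_events by (intro borel_cantelli_AE1) (auto simp: emeasure_eq_measure)
  then show ?thesis
    by (rule AE_mp) (auto intro!: AE_I2 elim: eventually_mono simp: A_def)
qed

lemma (in prob_space) AE_values_positive_mass:
  fixes X :: "nat \<Rightarrow> 'a \<Rightarrow> nat"
  assumes meas: "\<And>i. X i \<in> measurable M (count_space UNIV)"
    and distr: "\<And>i k. prob {\<omega>\<in>space M. X i \<omega> = k} = p k"
  shows "AE \<omega> in M. \<forall>i. p (X i \<omega>) \<noteq> 0"
proof -
  have "AE \<omega> in M. p k = 0 \<longrightarrow> X i \<omega> \<noteq> k" for i k
  proof (cases "p k = 0")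
    case True
    have "{\<omega>\<in>space M. X i \<omega> = k} \<in> events"
      using measurable_sets[OF meas, of "{k}" i] by (simp add: vimage_def Int_def conj_commute)
    then have "{\<omega>\<in>space M. X i \<omega> = k} \<in> null_sets M"
      using distr[of i k] True by (simp add: null_sets_def emeasure_eq_measure)
    then show ?thesis by (rule AE_mp[OF AE_not_in]) (auto intro: AE_I2)
  qed simp
  then have "AE \<omega> in M. \<forall>i k. p k = 0 \<longrightarrow> X i \<omega> \<noteq> k"
    by (simp add: AE_all_countable)
  then show ?thesis by (rule eventually_mono) blast
qed

theorem proposition4:
  fixes M :: "'a measure" and X :: "nat \<Rightarrow> 'a \<Rightarrow> nat"
    and p0 :: "nat \<Rightarrow> real" and S :: nat
  assumes "prob_space M"
    and meas: "\<And>i. X i \<in> measurable M (count_space UNIV)"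
    and indep: "prob_space.indep_vars M (\<lambda>_. count_space UNIV) X UNIV"
    and distr: "\<And>i k. measure M {\<omega>\<in>space M. X i \<omega> = k} = p0 k"
    and nonneg: "\<And>k. p0 k \<ge> 0"
    and sums1: "p0 sums 1"
    and conv: "convex_seq p0"
    and S_pos: "S \<noteq> 0"
    and supp: "seq_support p0 = {0..S}"
  shows "AE \<omega> in M. \<exists>n0. \<forall>n\<ge>n0.
           seq_support (lse (emp_pmf X n \<omega>)) = {0..S}
         \<or> seq_support (lse (emp_pmf X n \<omega>)) = {0..S+1}"
proof -
  interpret prob_space M by fact
  have p0_tail: "p0 k = 0" if "S < k" for k
    using supp[unfolded seq_support_def set_eq_iff, rule_format, of k] that by simp
  have p0_S: "p0 S > 0"
    using supp[unfolded seq_support_def set_eq_iff, rule_format, of S] nonneg[of S] by simp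
  define \<delta> where "\<delta> = p0 S / (4 * (real S + 2))"
  have "AE \<omega> in M. \<forall>j. eventually (\<lambda>n. \<bar>emp_pmf X n \<omega> j - p0 j\<bar> < \<delta>) sequentially"
    using p0_S unfolding AE_all_countable \<delta>_def
    by (intro allI AE_emp_pmf_eventually_close[OF meas indep distr]) simp
  moreover have "AE \<omega> in M. \<forall>i. p0 (X i \<omega>) \<noteq> 0"
    by (rule AE_values_positive_mass[OF meas distr])
  ultimately show ?thesis
  proof eventually_elim
    case (elim \<omega>)
    have "eventually (\<lambda>n. \<forall>j\<in>{..S}. \<bar>emp_pmf X n \<omega> j - p0 j\<bar> < \<delta>) sequentially"
      using elim(1) by (intro eventually_ball_finite) auto
    then obtain n0 where n0: "\<And>n j. n0 \<le> n \<Longrightarrow> j \<le> S \<Longrightarrow> \<bar>emp_pmf X n \<omega> j - p0 j\<bar> < \<delta>"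
      unfolding eventually_sequentially by auto
    have "emp_pmf X n \<omega> k = 0" if "S < k" for n k
      using elim(2) p0_tail[OF that] by (metis emp_pmf_eq_0)
    then show ?case
      using n0 by (intro exI[of _ n0] allI impI lse_support_near_convex[OF conv p0_tail p0_S])
        (auto simp: \<delta>_def less_imp_le)
  qed
qed

end
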